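(* Let $X$ be a compact metric space, $f\colon X\to X$ continuous, and $\bar x=(x_i)_{i\in\mathbb Z}$ a full orbit. Then $1\in\mathrm{Per}(\bar x)$, and $\mathrm{Per}(\bar x)$ is closed under taking (positive) divisors and least common multiples: if $k\in\mathrm{Per}(\bar x)$ and $d\mid k$ then $d\in\mathrm{Per}(\bar x)$, and if $m,n\in\mathrm{Per}(\bar x)$ then $\operatorname{lcm}(m,n)\in\mathrm{Per}(\bar x)$.
   Context: A full orbit is a sequence $\bar x=(x_i)_{i\in\mathbb Z}$ in $X$ with $f(x_i)=x_{i+1}$ for all $i$. $2^X$ is the space of nonempty closed subsets of $X$ with the Hausdorff metric, $2^f(C)=f(C)$. $\mathrm{Per}(\bar x)$ is the set of $k\in\mathbb N$ such that $\overline{\{x_{mk}:m\in\mathbb Z\}}$ is a periodic point of $2^f$ with fundamental period $k$. *)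

theory Defs
  imports "HOL-Analysis.Analysis"
begin

definition full_orbit :: "'a set \<Rightarrow> ('a \<Rightarrow> 'a) \<Rightarrow> (int \<Rightarrow> 'a) \<Rightarrow> bool" where
  "full_orbit X f x \<longleftrightarrow> (\<forall>i. x i \<in> X \<and> f (x i) = x (i + 1))"

definition induced_map :: "('a \<Rightarrow> 'a) \<Rightarrow> 'a set \<Rightarrow> 'a set" where
  "induced_map f C = f ` C"

definition periodic_with_fundamental_period :: "('b \<Rightarrow> 'b) \<Rightarrow> 'b \<Rightarrow> nat \<Rightarrow> bool" where
  "periodic_with_fundamental_period g C k \<longleftrightarrow>
     k > 0 \<and> (g ^^ k) C = C \<and> (\<forall>j. 0 < j \<and> j < k \<longrightarrow> (g ^^ j) C \<noteq> C)"

definition sub_orbit_closure :: "(int \<Rightarrow> 'a::topological_space) \<Rightarrow> nat \<Rightarrow> 'a set" where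
  "sub_orbit_closure x k = closure (range (\<lambda>m::int. x (m * int k)))"

definition Per :: "('a::topological_space \<Rightarrow> 'a) \<Rightarrow> (int \<Rightarrow> 'a) \<Rightarrow> nat set" where
  "Per f x = {k. periodic_with_fundamental_period (induced_map f) (sub_orbit_closure x k) k}"

end

theory Submission
  imports Defs
begin

text \<open>
  Write \<open>C\<^sub>k(c)\<close> (\<open>residue_closure x k c\<close>) for the closure of \<open>{x (m k + c) | m \<in> \<int>}\<close>.
  It depends only on \<open>c mod k\<close>, and by compactness the induced map sends \<open>C\<^sub>k(c)\<close> onto
  \<open>C\<^sub>k(c + 1)\<close>; so \<open>k \<in> Per\<close> means that \<open>C\<^sub>k(j) = C\<^sub>k(0)\<close> forces \<open>k dvd j\<close>.
  The key observation: \<open>x\<^sub>i \<in> C\<^sub>k(i + r)\<close> for all \<open>i\<close> says \<open>C\<^sub>k(0) \<subseteq> C\<^sub>k(r)\<close>, and since the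
  induced map is monotone and \<open>C\<^sub>k(0)\<close> is periodic, this inclusion is an equality, so
  \<open>k dvd r\<close> when \<open>k \<in> Per\<close>. For \<open>L = lcm m n\<close> this applies to \<open>m\<close> and \<open>n\<close> via
  \<open>C\<^sub>L(c) \<subseteq> C\<^sub>m(c)\<close>. For a divisor \<open>d\<close> of \<open>k\<close>, \<open>C\<^sub>d(c)\<close> is the finite union of the
  \<open>C\<^sub>k(c + s d)\<close>; a pigeonhole argument along \<open>i \<rightarrow> -\<infinity>\<close>, followed by pushing forward
  with \<open>f\<close>, turns \<open>x\<^sub>i \<in> C\<^sub>d(i + j)\<close> into \<open>x\<^sub>i \<in> C\<^sub>k(i + r)\<close> for a single \<open>r \<equiv> j (mod d)\<close>.
\<close>

lemma periodic_with_fundamental_period_iff_dvd: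
  "periodic_with_fundamental_period g a k \<longleftrightarrow>
     0 < k \<and> (g ^^ k) a = a \<and> (\<forall>j. (g ^^ j) a = a \<longrightarrow> k dvd j)"
proof
  assume per: "periodic_with_fundamental_period g a k"
  then have "0 < k" and fix_a: "(g ^^ k) a = a"
    by (auto simp: periodic_with_fundamental_period_def)
  moreover have "k dvd j" if "(g ^^ j) a = a" for j
  proof (rule ccontr)
    assume "\<not> k dvd j"
    then have "0 < j mod k" "j mod k < k"
      using \<open>0 < k\<close> by (auto simp: dvd_eq_mod_eq_0)
    moreover have "(g ^^ (j mod k)) a = a"
      using funpow_mod_eq[OF fix_a] that by simp
    ultimately show False
      using per by (auto simp: periodic_with_fundamental_period_def)
  qed
  ultimately show "0 < k \<and> (g ^^ k) a = a \<and> (\<forall>j. (g ^^ j) a = a \<longrightarrow> k dvd j)"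
    by blast
qed (unfold periodic_with_fundamental_period_def, blast dest: nat_dvd_not_less)

lemma funpow_le_periodic_imp_eq:
  fixes a :: "'b::order"
  assumes "mono g" and "0 < k" and fix_a: "(g ^^ k) a = a" and le: "a \<le> (g ^^ r) a"
  shows "(g ^^ r) a = a"
proof (rule antisym)
  have le_mult: "a \<le> (g ^^ (i * r)) a" for i
  proof (induction i)
    case (Suc i)
    have "(g ^^ (i * r)) a \<le> (g ^^ (i * r)) ((g ^^ r) a)"
      using funpow_mono[OF \<open>mono g\<close> le] .
    also have "\<dots> = (g ^^ (Suc i * r)) a"
      by (simp only: mult_Suc add.commute[of r] funpow_add comp_apply)
    finally show ?case
      using Suc by order
  qed simp
  have "(g ^^ r) a \<le> (g ^^ r) ((g ^^ ((k - 1) * r)) a)"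
    using funpow_mono[OF \<open>mono g\<close> le_mult] .
  also have "\<dots> = (g ^^ (k * r)) a"
  proof -
    have "k * r = r + (k - 1) * r"
      using \<open>0 < k\<close> by (cases k) simp_all
    then show ?thesis
      by (simp only: funpow_add comp_apply)
  qed
  also have "\<dots> = a"
    using funpow_mod_eq[OF fix_a, of "k * r"] by simp
  finally show "(g ^^ r) a \<le> a" .
qed (rule le)

lemma closure_image_eq_compact:
  fixes f :: "'a::metric_space \<Rightarrow> 'b::metric_space"
  assumes "compact X" and "continuous_on X f" and "A \<subseteq> X"
  shows "f ` closure A = closure (f ` A)"
proof
  have "closure A \<subseteq> X"
    using assms by (simp add: closure_minimal compact_imp_closed)
  then have cont: "continuous_on (closure A) f" and "compact (closure A)"
    using assms continuous_on_subset compact_Int_closed[of X "closure A"]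
    by (auto simp: Int_absorb1)
  then have "closed (f ` closure A)"
    by (simp add: compact_continuous_image compact_imp_closed)
  then show "closure (f ` A) \<subseteq> f ` closure A"
    by (simp add: closure_minimal closure_subset image_mono)
  show "f ` closure A \<subseteq> closure (f ` A)"
    by (rule image_closure_subset[OF cont closed_closure closure_subset])
qed

definition residue_closure :: "(int \<Rightarrow> 'a::topological_space) \<Rightarrow> nat \<Rightarrow> int \<Rightarrow> 'a set" where
  "residue_closure x k c = closure (range (\<lambda>m::int. x (m * int k + c)))"

lemma residue_closure_add_mult:
  "residue_closure x k (c + a * int k) = residue_closure x k c"
proof -
  define h where "h m = x (m * int k + c)" for m
  have "range (\<lambda>m. x (m * int k + (c + a * int k))) = range (\<lambda>m. h (m + a))"
    by (simp add: h_def algebra_simps)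
  also have "\<dots> = h ` range (\<lambda>m. m + a)"
    by (simp only: image_image)
  finally show ?thesis
    by (simp add: residue_closure_def h_def)
qed

lemma residue_closure_mod: "residue_closure x k (c mod int k) = residue_closure x k c"
  by (metis residue_closure_add_mult mod_div_mult_eq)

lemma mem_residue_closure: "x (a * int k + c) \<in> residue_closure x k c"
  unfolding residue_closure_def by (rule closure_subset[THEN subsetD]) (rule rangeI)

lemma sub_orbit_closure_eq_residue_closure: "sub_orbit_closure x k = residue_closure x k 0"
  by (simp add: sub_orbit_closure_def residue_closure_def)

lemma residue_closure_subset_of_dvd:
  assumes "m dvd k"
  shows "residue_closure x k c \<subseteq> residue_closure x m c"
proof -
  obtain q where "k = m * q"
    using assms by blast
  then have "x (a * int k + c) = x ((a * int q) * int m + c)" for a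
    by (simp add: algebra_simps)
  then show ?thesis
    unfolding residue_closure_def by (intro closure_mono) (auto intro: range_eqI)
qed

lemma residue_closure_subset_Union:
  assumes "k = d * q" and "0 < q"
  shows "residue_closure x d c \<subseteq> (\<Union>s<q. residue_closure x k (c + int s * int d))"
  unfolding residue_closure_def[of x d]
proof (rule closure_minimal)
  show "closed (\<Union>s<q. residue_closure x k (c + int s * int d))"
    by (auto simp: residue_closure_def)
  show "range (\<lambda>m. x (m * int d + c)) \<subseteq> (\<Union>s<q. residue_closure x k (c + int s * int d))"
  proof clarify
    fix m :: int
    define s where "s = nat (m mod int q)"
    have "s < q"
      using \<open>0 < q\<close> by (simp add: s_def nat_less_iff)
    have "m * int d = ((m div int q) * int q + int s) * int d"
      using \<open>0 < q\<close> by (simp add: s_def)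
    then have "m * int d + c = (m div int q) * int k + (c + int s * int d)"
      using assms(1) by (simp add: algebra_simps)
    then have "x (m * int d + c) \<in> residue_closure x k (c + int s * int d)"
      by (simp only: mem_residue_closure)
    with \<open>s < q\<close> show "x (m * int d + c) \<in> (\<Union>s<q. residue_closure x k (c + int s * int d))"
      by blast
  qed
qed

lemma sub_orbit_closure_subset_of_orbit_shift:
  assumes shift: "\<And>i. x i \<in> residue_closure x k (i + r)"
  shows "sub_orbit_closure x k \<subseteq> residue_closure x k r"
  unfolding sub_orbit_closure_def
proof (rule closure_minimal)
  show "range (\<lambda>m. x (m * int k)) \<subseteq> residue_closure x k r"
  proof clarify
    fix m
    have "x (m * int k) \<in> residue_closure x k (r + m * int k)"
      using shift[of "m * int k"] by (simp add: add.commute)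
    then show "x (m * int k) \<in> residue_closure x k r"
      by (simp only: residue_closure_add_mult)
  qed
qed (simp add: residue_closure_def)

locale compact_full_orbit =
  fixes X :: "'a::metric_space set" and f :: "'a \<Rightarrow> 'a" and x :: "int \<Rightarrow> 'a"
  assumes compact: "compact X" and continuous: "continuous_on X f"
    and orbit: "full_orbit X f x"
begin

lemma orbit_in: "x i \<in> X" and orbit_step: "f (x i) = x (i + 1)"
  using orbit by (auto simp: full_orbit_def)

lemma induced_map_residue_closure:
  "induced_map f (residue_closure x k c) = residue_closure x k (c + 1)"
proof -
  have "induced_map f (residue_closure x k c) = closure (f ` range (\<lambda>m. x (m * int k + c)))"
    unfolding induced_map_def residue_closure_def
    by (rule closure_image_eq_compact[OF compact continuous]) (auto simp: orbit_in)
  also have "f ` range (\<lambda>m. x (m * int k + c)) = range (\<lambda>m. x (m * int k + (c + 1)))"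
    by (auto simp: orbit_step image_comp add.assoc)
  finally show ?thesis
    by (simp add: residue_closure_def)
qed

lemma funpow_induced_map_residue_closure:
  "(induced_map f ^^ j) (residue_closure x k c) = residue_closure x k (c + int j)"
  by (induction j) (auto simp: induced_map_residue_closure algebra_simps)

lemma mem_residue_closure_forward:
  assumes "x i \<in> residue_closure x k c"
  shows "x (i + int t) \<in> residue_closure x k (c + int t)"
proof (induction t)
  case (Suc t)
  then have "f (x (i + int t)) \<in> induced_map f (residue_closure x k (c + int t))"
    by (simp add: induced_map_def)
  then show ?case
    by (simp add: induced_map_residue_closure orbit_step algebra_simps)
qed (simp add: assms)

lemma Per_iff:
  "k \<in> Per f x \<longleftrightarrow> 0 < k \<and>
     (\<forall>j. (induced_map f ^^ j) (sub_orbit_closure x k) = sub_orbit_closure x k \<longrightarrow> k dvd j)"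
proof -
  have "(induced_map f ^^ k) (sub_orbit_closure x k) = sub_orbit_closure x k"
    using residue_closure_add_mult[of x k 0 1]
    by (simp add: sub_orbit_closure_eq_residue_closure funpow_induced_map_residue_closure)
  then show ?thesis
    by (auto simp: Per_def periodic_with_fundamental_period_iff_dvd)
qed

lemma Per_dvd_of_orbit_shift:
  assumes "k \<in> Per f x" and shift: "\<And>i. x i \<in> residue_closure x k (i + r)"
  shows "int k dvd r"
proof -
  define S where "S = sub_orbit_closure x k"
  define r' where "r' = nat (r mod int k)"
  have "0 < k" and dvd: "\<And>j. (induced_map f ^^ j) S = S \<Longrightarrow> k dvd j"
    using assms(1) by (auto simp: Per_iff S_def)
  have r'_orbit: "(induced_map f ^^ r') S = residue_closure x k r"
    using \<open>0 < k\<close> residue_closure_mod[of x k r]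
    by (simp add: S_def r'_def sub_orbit_closure_eq_residue_closure funpow_induced_map_residue_closure)
  have "S \<subseteq> residue_closure x k r"
    unfolding S_def by (rule sub_orbit_closure_subset_of_orbit_shift[OF shift])
  then have "S \<subseteq> (induced_map f ^^ r') S"
    by (simp only: r'_orbit)
  moreover have "mono (induced_map f)"
    by (auto simp: mono_def induced_map_def)
  moreover have "(induced_map f ^^ k) S = S"
    using assms(1) by (simp add: S_def Per_def periodic_with_fundamental_period_def)
  ultimately have "(induced_map f ^^ r') S = S"
    using funpow_le_periodic_imp_eq[OF _ \<open>0 < k\<close>] by blast
  then have "k dvd r'"
    by (rule dvd)
  moreover have "r' < k"
    using \<open>0 < k\<close> by (simp add: r'_def nat_less_iff)
  ultimately have "r' = 0"
    by (meson nat_dvd_not_less gr0I)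
  moreover have "0 \<le> r mod int k"
    using \<open>0 < k\<close> by simp
  ultimately show ?thesis
    by (simp add: r'_def dvd_eq_mod_eq_0)
qed

lemma orbit_shift_of_funpow_eq:
  assumes "0 < d" and eq: "(induced_map f ^^ j) (sub_orbit_closure x d) = sub_orbit_closure x d"
  shows "x i \<in> residue_closure x d (i + int j)"
proof -
  define g where "g = induced_map f"
  define S where "S = sub_orbit_closure x d"
  define a where "a = nat (i mod int d)"
  have Ri: "residue_closure x d i = (g ^^ a) S"
    using \<open>0 < d\<close> residue_closure_mod[of x d i]
    by (simp add: g_def S_def a_def sub_orbit_closure_eq_residue_closure
        funpow_induced_map_residue_closure)
  have "residue_closure x d (i + int j) = (g ^^ j) (residue_closure x d i)"
    by (simp add: g_def funpow_induced_map_residue_closure)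
  also have "\<dots> = (g ^^ j) ((g ^^ a) S)"
    by (simp only: Ri)
  also have "\<dots> = (g ^^ a) ((g ^^ j) S)"
    by (metis add.commute comp_apply funpow_add)
  also have "\<dots> = residue_closure x d i"
    using eq by (simp add: Ri g_def S_def)
  finally show ?thesis
    using mem_residue_closure[of x 0 d i] by simp
qed

lemma orbit_shift_lift:
  assumes "0 < k" and "d dvd k" and shift: "\<And>i. x i \<in> residue_closure x d (i + j)"
  obtains r where "int d dvd r - j" and "\<And>i. x i \<in> residue_closure x k (i + r)"
proof -
  obtain q where kq: "k = d * q"
    using \<open>d dvd k\<close> by blast
  with \<open>0 < k\<close> have "0 < q"
    by simp
  have "\<exists>s<q. x (- int N) \<in> residue_closure x k (- int N + j + int s * int d)" for N
    using residue_closure_subset_Union[OF kq \<open>0 < q\<close>, of x "- int N + j"] shift[of "- int N"]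
    by auto
  then obtain sf where sf: "\<And>N. sf N < q \<and> x (- int N) \<in> residue_closure x k (- int N + j + int (sf N) * int d)"
    by metis
  have "finite (range sf)"
    using sf by (auto intro: finite_subset[of _ "{..<q}"])
  then obtain s where s: "infinite {N. sf N = sf s}"
    using pigeonhole_infinite[of UNIV sf] by auto
  define r where "r = j + int (sf s) * int d"
  show thesis
  proof
    show "int d dvd r - j"
      by (simp add: r_def)
    fix i
    obtain N where "sf N = sf s" and "nat (- i) \<le> N"
      using s unfolding infinite_nat_iff_unbounded_le by blast
    then have "x (- int N) \<in> residue_closure x k (- int N + r)"
      using sf[of N] by (simp add: r_def algebra_simps)
    moreover have "int (nat (i + int N)) = i + int N"
      using \<open>nat (- i) \<le> N\<close> by simp
    ultimately show "x i \<in> residue_closure x k (i + r)"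
      using mem_residue_closure_forward[of "- int N" k "- int N + r" "nat (i + int N)"]
      by (simp add: algebra_simps)
  qed
qed

lemma Per_one: "1 \<in> Per f x"
  by (simp add: Per_iff)

lemma Per_divisor:
  assumes "k \<in> Per f x" and "d dvd k"
  shows "d \<in> Per f x"
proof -
  have "0 < k"
    using assms(1) by (simp add: Per_iff)
  with \<open>d dvd k\<close> have "0 < d"
    by (simp add: dvd_pos_nat)
  have "d dvd j"
    if eq: "(induced_map f ^^ j) (sub_orbit_closure x d) = sub_orbit_closure x d" for j
  proof -
    obtain r where "int d dvd r - int j" and "\<And>i. x i \<in> residue_closure x k (i + r)"
      using orbit_shift_lift[OF \<open>0 < k\<close> \<open>d dvd k\<close> orbit_shift_of_funpow_eq[OF \<open>0 < d\<close> eq]]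
      by blast
    then have "int k dvd r"
      using Per_dvd_of_orbit_shift[OF assms(1)] by blast
    with \<open>d dvd k\<close> have "int d dvd r"
      by (meson dvd_trans int_dvd_int_iff)
    with \<open>int d dvd r - int j\<close> show "d dvd j"
      by (metis dvd_diff_right_iff int_dvd_int_iff)
  qed
  with \<open>0 < d\<close> show ?thesis
    by (simp add: Per_iff)
qed

lemma Per_lcm:
  assumes "m \<in> Per f x" and "n \<in> Per f x"
  shows "lcm m n \<in> Per f x"
proof -
  have "0 < m" and "0 < n"
    using assms by (simp_all add: Per_iff)
  then have "0 < lcm m n"
    by (rule lcm_pos_nat)
  have "lcm m n dvd j"
    if eq: "(induced_map f ^^ j) (sub_orbit_closure x (lcm m n)) = sub_orbit_closure x (lcm m n)"
    for j
  proof -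
    have shift: "x i \<in> residue_closure x l (i + int j)" if "l dvd lcm m n" for i l
      by (rule subsetD[OF residue_closure_subset_of_dvd[OF that]
            orbit_shift_of_funpow_eq[OF \<open>0 < lcm m n\<close> eq]])
    have "int m dvd int j"
      by (rule Per_dvd_of_orbit_shift[OF assms(1) shift[OF dvd_lcm1]])
    moreover have "int n dvd int j"
      by (rule Per_dvd_of_orbit_shift[OF assms(2) shift[OF dvd_lcm2]])
    ultimately show ?thesis
      unfolding int_dvd_int_iff by (rule lcm_least)
  qed
  with \<open>0 < lcm m n\<close> show ?thesis
    unfolding Per_iff by blast
qed

end

theorem proposition4p7:
  fixes X :: "'a::metric_space set" and f :: "'a \<Rightarrow> 'a" and x :: "int \<Rightarrow> 'a"
  assumes "compact X" and "continuous_on X f" and "f ` X \<subseteq> X"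
    and "full_orbit X f x"
  shows "1 \<in> Per f x
    \<and> (\<forall>k d. k \<in> Per f x \<longrightarrow> d dvd k \<longrightarrow> d \<in> Per f x)
    \<and> (\<forall>m n. m \<in> Per f x \<longrightarrow> n \<in> Per f x \<longrightarrow> lcm m n \<in> Per f x)"
proof -
  interpret compact_full_orbit X f x
    using assms(1,2,4) by unfold_locales
  show ?thesis
    using Per_one Per_divisor Per_lcm by blast
qed

end
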